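(* Let $v_1,\dots,v_n$ be vectors in an $l$-dimensional vector space over $\mathrm{GF}(2)$. Suppose that for every subset $C\subseteq\{1,\dots,n\}$ with $|C|\equiv 2 \pmod 4$ we have $\sum_{i\in C} v_i \neq \mathbf{0}$. Then $l \geq \sqrt{n}-2$. *)

theory Defs
  imports Complex_Main "HOL-Library.Z2" "HOL-Library.Function_Algebras"
begin

end

theory Submission
  imports Defs "HOL-Library.FuncSet"
begin

(* Any m + 1 vectors of GF(2)^m have a nonempty subset with zero sum (two of the 2^(m+1)
   subset sums coincide; take the symmetric difference), and appending a coordinate 1 to
   every vector makes that subset even: any l + 2 vectors of GF(2)^l contain a nonempty even
   zero-sum subset. Suppose no zero-sum subset has size 2 mod 4; then every even zero-sum
   subset has size 0 mod 4. Split (l + 2)^2 vectors into l + 2 blocks of size l + 2, pick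
   such a subset A_k in each block and a representative a_k of each A_k, and such a subset R
   of the representatives. For a_k in R, the sets A_k and R meet exactly in a_k, so their
   symmetric difference has zero sum and size |A_k| + |R| - 2 = 2 mod 4. *)

lemma sum_apply: "sum f A x = (\<Sum>i\<in>A. f i x)"
  by (induction A rule: infinite_finite_induct) auto

lemma card_vanishing_functions:
  "card {x :: nat \<Rightarrow> 'a::zero. \<forall>j\<ge>m. x j = 0} = card (UNIV :: 'a set) ^ m"
proof -
  have "bij_betw (\<lambda>x. restrict x {..<m}) {x :: nat \<Rightarrow> 'a. \<forall>j\<ge>m. x j = 0} ({..<m} \<rightarrow>\<^sub>E UNIV)"
    by (rule bij_betw_byWitness[where f' = "\<lambda>y j. if j < m then y j else 0"])
      (auto simp: fun_eq_iff PiE_def extensional_def)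
  then show ?thesis
    by (simp add: bij_betw_same_card card_PiE)
qed

lemma sum_sym_diff:
  fixes f :: "'i \<Rightarrow> 'a::comm_monoid_add"
  assumes "finite A" "finite B" and char_2: "\<And>x::'a. x + x = 0"
  shows "sum f (sym_diff A B) = sum f A + sum f B"
proof -
  have "sum f A + sum f B = sum f (A - B) + sum f (B - A) + (sum f (A \<inter> B) + sum f (A \<inter> B))"
    using assms(1,2) by (simp add: sum.Int_Diff[of A f B] sum.Int_Diff[of B f A] Int_commute ac_simps)
  also have "\<dots> = sum f (sym_diff A B)"
    using assms(1,2) by (simp add: char_2 sum.union_disjoint Diff_Int_distrib2 Int_Diff)
  finally show ?thesis ..
qed

lemma fun_bit_add_self: "x + x = (0 :: 'a \<Rightarrow> bit)"
  by (simp add: fun_eq_iff)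

lemma card_sym_diff:
  assumes "finite A" "finite B"
  shows "card (sym_diff A B) + 2 * card (A \<inter> B) = card A + card B"
proof -
  have "card (sym_diff A B) = card (A - B) + card (B - A)"
    using assms by (intro card_Un_disjoint) auto
  then show ?thesis
    using assms card_Int_Diff[of A B] card_Int_Diff[of B A] by (simp add: Int_commute)
qed

lemma exists_zero_sum_subset:
  fixes v :: "'i \<Rightarrow> nat \<Rightarrow> bit"
  assumes "finite J" and vanish: "\<forall>i\<in>J. \<forall>j\<ge>m. v i j = 0" and "m < card J"
  shows "\<exists>C\<subseteq>J. C \<noteq> {} \<and> sum v C = 0"
proof -
  let ?V = "{x :: nat \<Rightarrow> bit. \<forall>j\<ge>m. x j = 0}"
  have UNIV_bit: "(UNIV :: bit set) = {0, 1}"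
    using bit_not_zero_iff by blast
  have card_V: "card ?V = 2 ^ m"
    unfolding card_vanishing_functions UNIV_bit by (simp add: numeral_2_eq_2)
  have "sum v ` Pow J \<subseteq> ?V"
    using vanish by (force simp: sum_apply intro!: sum.neutral)
  moreover have "card ?V < card (Pow J)"
    using assms(1,3) by (simp add: card_V card_Pow)
  ultimately have "\<not> inj_on (sum v) (Pow J)"
    using card_inj_on_le[of "sum v" "Pow J" ?V] card_V card_ge_0_finite by fastforce
  then obtain S T where ST: "S \<subseteq> J" "T \<subseteq> J" "S \<noteq> T" "sum v S = sum v T"
    by (auto simp: inj_on_def)
  have "sum v (sym_diff S T) = sum v S + sum v T"
    using ST(1,2) assms(1) by (intro sum_sym_diff fun_bit_add_self) (auto intro: finite_subset)
  then show ?thesis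
    using ST fun_bit_add_self by (intro exI[of _ "sym_diff S T"]) auto
qed

lemma exists_even_zero_sum_subset:
  fixes v :: "'i \<Rightarrow> nat \<Rightarrow> bit"
  assumes "finite J" and vanish: "\<forall>i\<in>J. \<forall>j\<ge>m. v i j = 0" and "m + 2 \<le> card J"
  shows "\<exists>C\<subseteq>J. C \<noteq> {} \<and> even (card C) \<and> sum v C = 0"
proof -
  define u where "u i = (v i)(m := 1)" for i
  have "\<forall>i\<in>J. \<forall>j\<ge>m + 1. u i j = 0"
    using vanish by (simp add: u_def)
  then obtain C where C: "C \<subseteq> J" "C \<noteq> {}" "sum u C = 0"
    using exists_zero_sum_subset[of J "m + 1" u] assms(1,3) by auto
  have "of_nat (card C) = (0 :: bit)"
    using fun_cong[OF C(3), of m] by (simp add: sum_apply u_def)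
  then have "even (card C)"
    by (metis even_of_nat even_zero)
  moreover have "sum v C = 0"
  proof (rule ext)
    fix j
    show "sum v C j = 0 j"
    proof (cases "j = m")
      case True
      then show ?thesis
        using vanish C(1) by (auto simp: sum_apply intro!: sum.neutral)
    next
      case False
      then show ?thesis
        using fun_cong[OF C(3), of j] by (simp add: sum_apply u_def)
    qed
  qed
  ultimately show ?thesis
    using C by blast
qed

lemma grid_even_zero_sum_subsets_meeting_in_one_point:
  fixes w :: "nat \<times> nat \<Rightarrow> nat \<Rightarrow> bit"
  assumes "l + 2 \<le> p" and vanish: "\<forall>x\<in>{..<p} \<times> {..<p}. \<forall>j\<ge>l. w x j = 0"
  obtains A R x where "A \<subseteq> {..<p} \<times> {..<p}" "R \<subseteq> {..<p} \<times> {..<p}" "A \<inter> R = {x}"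
    "even (card A)" "even (card R)" "sum w A = 0" "sum w R = 0"
proof -
  let ?G = "{..<p} \<times> {..<p}"
  have "\<exists>A\<subseteq>{k} \<times> {..<p}. A \<noteq> {} \<and> even (card A) \<and> sum w A = 0" if "k < p" for k
    using exists_even_zero_sum_subset[of "{k} \<times> {..<p}" l w] vanish that assms(1) by auto
  then obtain A where A: "\<And>k. k < p \<Longrightarrow> A k \<subseteq> {k} \<times> {..<p} \<and> A k \<noteq> {} \<and> even (card (A k)) \<and> sum w (A k) = 0"
    by metis
  then have "\<exists>x. x \<in> A k" if "k < p" for k
    using that by blast
  then obtain a where a_A: "\<And>k. k < p \<Longrightarrow> a k \<in> A k"
    by metis
  have a_fst: "fst (a k) = k" if "k < p" for k
    using A[OF that] a_A[OF that] by auto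
  have a_G: "a k \<in> ?G" if "k < p" for k
    using A[OF that] a_A[OF that] that by auto
  have "\<forall>k\<in>{..<p}. \<forall>j\<ge>l. (w \<circ> a) k j = 0"
    using vanish a_G by (metis comp_apply lessThan_iff)
  then obtain K where K: "K \<subseteq> {..<p}" "K \<noteq> {}" "even (card K)" "sum (w \<circ> a) K = 0"
    using exists_even_zero_sum_subset[of "{..<p}" l "w \<circ> a"] assms(1) by auto
  define R where "R = a ` K"
  have "inj_on a K"
    by (rule inj_on_inverseI[where g = fst]) (use a_fst K(1) in auto)
  then have "even (card R)" "sum w R = 0"
    using K(3,4) by (simp_all add: R_def card_image sum.reindex)
  moreover have "R \<subseteq> ?G"
    using a_G K(1) unfolding R_def by (meson image_subset_iff lessThan_iff subsetD)
  moreover obtain k where k: "k \<in> K"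
    using K(2) by blast
  then have "k < p"
    using K(1) by blast
  moreover have "A k \<inter> R = {a k}"
    using A[OF \<open>k < p\<close>] a_A a_fst k K(1) unfolding R_def by fastforce
  ultimately show ?thesis
    using that[of "A k" R "a k"] A[OF \<open>k < p\<close>] by auto
qed

lemma grid_zero_sum_subset_card_mod_4_eq_2:
  fixes w :: "nat \<times> nat \<Rightarrow> nat \<Rightarrow> bit"
  assumes "l + 2 \<le> p" and "\<forall>x\<in>{..<p} \<times> {..<p}. \<forall>j\<ge>l. w x j = 0"
  shows "\<exists>C\<subseteq>{..<p} \<times> {..<p}. card C mod 4 = 2 \<and> sum w C = 0"
proof (rule ccontr)
  let ?G = "{..<p} \<times> {..<p}"
  assume no_C: "\<not> ?thesis"
  have four_dvd: "4 dvd card C" if "C \<subseteq> ?G" "even (card C)" "sum w C = 0" for C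
  proof -
    have "card C mod 4 \<noteq> 2"
      using no_C that(1,3) by blast
    then show ?thesis
      using that(2) by presburger
  qed
  obtain A R x where AR: "A \<subseteq> ?G" "R \<subseteq> ?G" "A \<inter> R = {x}"
    "even (card A)" "even (card R)" "sum w A = 0" "sum w R = 0"
    using grid_even_zero_sum_subsets_meeting_in_one_point[OF assms] by blast
  have fin: "finite A" "finite R"
    using finite_subset[OF AR(1)] finite_subset[OF AR(2)] by auto
  have "sum w (sym_diff A R) = 0"
    using sum_sym_diff[OF fin fun_bit_add_self, of w] AR(6,7) by simp
  moreover have "card (sym_diff A R) mod 4 = 2"
  proof -
    have "4 dvd card A" "4 dvd card R"
      using four_dvd AR by simp_all
    moreover have "card (sym_diff A R) + 2 = card A + card R"
      using card_sym_diff[OF fin] AR(3) by simp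
    ultimately show ?thesis
      by presburger
  qed
  moreover have "sym_diff A R \<subseteq> ?G"
    using AR(1,2) by blast
  ultimately show False
    using no_C by blast
qed

lemma exists_zero_sum_subset_card_mod_4_eq_2:
  fixes v :: "'i \<Rightarrow> nat \<Rightarrow> bit"
  assumes "finite I" and vanish: "\<forall>i\<in>I. \<forall>j\<ge>l. v i j = 0" and "(l + 2)\<^sup>2 \<le> card I"
  shows "\<exists>C\<subseteq>I. card C mod 4 = 2 \<and> sum v C = 0"
proof -
  let ?G = "{..<l + 2} \<times> {..<l + 2}"
  obtain f where f: "f ` ?G \<subseteq> I" "inj_on f ?G"
    using card_le_inj[of ?G I] assms(1,3) by (auto simp: power2_eq_square)
  then have "\<forall>x\<in>?G. \<forall>j\<ge>l. (v \<circ> f) x j = 0"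
    using vanish by auto
  then obtain C where C: "C \<subseteq> ?G" "card C mod 4 = 2" "sum (v \<circ> f) C = 0"
    using grid_zero_sum_subset_card_mod_4_eq_2[of l "l + 2" "v \<circ> f"] by auto
  have "inj_on f C"
    using f(2) C(1) by (rule inj_on_subset)
  then show ?thesis
    using C f(1) by (intro exI[of _ "f ` C"]) (auto simp: card_image sum.reindex)
qed

theorem lemma4:
  fixes v :: "nat \<Rightarrow> nat \<Rightarrow> bit" and n l :: nat
  assumes in_space: "\<forall>i\<in>{1..n}. \<forall>j\<ge>l. v i j = 0"
    and sums: "\<forall>C. C \<subseteq> {1..n} \<and> card C mod 4 = 2 \<longrightarrow> (\<Sum>i\<in>C. v i) \<noteq> 0"
  shows "real l \<ge> sqrt (real n) - 2"
proof (rule ccontr)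
  assume "\<not> ?thesis"
  then have "\<bar>real (l + 2)\<bar> \<le> sqrt (real n)"
    by simp
  then have "real ((l + 2)\<^sup>2) \<le> real n"
    unfolding of_nat_power by (rule sqrt_ge_absD)
  then have "(l + 2)\<^sup>2 \<le> n"
    by (simp only: of_nat_le_iff)
  then have "\<exists>C\<subseteq>{1..n}. card C mod 4 = 2 \<and> sum v C = 0"
    using exists_zero_sum_subset_card_mod_4_eq_2[of "{1..n}" l v] in_space by simp
  then show False
    using sums by blast
qed

end
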